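(* Let $p,q\ge0$, $n=p+q\ge1$, $N=2^{\lfloor (n+1)/2\rfloor}$. For every $M\in\mathcal{G}^{\mathbb{C}}_{p,q}$: $C_{(N)}(M^\dagger M)=0$ if and only if $C_{(N)}(M)=0$; and $C_{(1)}(M^\dagger M)=0$ if and only if $M=0$.
   Context: Let $\mathcal{G}_{p,q}$ be the real Clifford algebra with identity $e$ and generators $e_1,\dots,e_n$ satisfying $e_ae_b+e_be_a=2\eta_{ab}e$, $\eta={\rm diag}(1,\dots,1,-1,\dots,-1)$ ($p$ ones, $q$ minus ones), basis elements $e_A=e_{a_1}\cdots e_{a_k}$ for $a_1<\dots<a_k$, and $\mathcal{G}^{\mathbb{C}}_{p,q}=\mathbb{C}\otimes\mathcal{G}_{p,q}$ with elements $M=\sum_A m_Ae_A$, $m_A\in\mathbb{C}$. Hermitian conjugation: $M^\dagger=\sum_A\overline{m_A}(e_A)^{-1}$. Let $\langle M\rangle_0$ denote the coefficient of $e$ (scalar part). Let $\beta$ be an algebra isomorphism from $\mathcal{G}^{\mathbb{C}}_{p,q}$ onto ${\rm Mat}(N,\mathbb{C})$ if $n$ is even, and onto block-diagonal matrices ${\rm diag}(X,Y)$, $X,Y\in{\rm Mat}(N/2,\mathbb{C})$, if $n$ is odd. The characteristic polynomial coefficients $C_{(k)}(M)$, $k=1,\dots,N$, are defined by $\det(\lambda I_N-\beta(M))=\lambda^N-C_{(1)}(M)\lambda^{N-1}-\cdots-C_{(N)}(M)$ (independent of $\beta$); equivalently they are given by the recursion $M_{(1)}=M$, $C_{(k)}=\frac{N}{k}\langle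 M_{(k)}\rangle_0$, $M_{(k+1)}=M(M_{(k)}-C_{(k)})$. *)

theory Defs
  imports Complex_Main
begin

text \<open>Elements of the complexified Clifford algebra G^C_{p,q}, n = p + q, are represented
  by their coefficient functions M :: nat set => complex, where M A is the coefficient of
  the basis blade e_A, A a subset of {0..<n} (generators indexed 0..n-1, the first p
  square to +1, the remaining q to -1). Coefficients outside Pow {0..<n} are required to
  vanish where relevant.\<close>

type_synonym mv = "nat set \<Rightarrow> complex"

definition eta :: "nat \<Rightarrow> nat \<Rightarrow> complex" where
  "eta p a = (if a < p then 1 else -1)"

text \<open>e_A e_B = blade_sign p A B * e_{A symmetric-difference B}.\<close>
definition blade_sign :: "nat \<Rightarrow> nat set \<Rightarrow> nat set \<Rightarrow> complex" where
  "blade_sign p A B =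
     (-1) ^ card {(a, b). a \<in> A \<and> b \<in> B \<and> b < a} * (\<Prod>a\<in>A \<inter> B. eta p a)"

definition cl_mult :: "nat \<Rightarrow> nat \<Rightarrow> mv \<Rightarrow> mv \<Rightarrow> mv" where
  "cl_mult n p M M' = (\<lambda>C. \<Sum>A\<in>Pow {0..<n}. \<Sum>B\<in>Pow {0..<n}.
      if (A - B) \<union> (B - A) = C then blade_sign p A B * M A * M' B else 0)"

definition cl_one :: mv where
  "cl_one = (\<lambda>A. if A = {} then 1 else 0)"

definition scalar_part :: "mv \<Rightarrow> complex" where
  "scalar_part M = M {}"

text \<open>Hermitian conjugation M^dagger = sum conj(m_A) (e_A)^{-1}. Since e_A e_A =
  blade_sign p A A * e with blade_sign p A A in {1,-1}, (e_A)^{-1} = blade_sign p A A * e_A.\<close>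
definition herm :: "nat \<Rightarrow> mv \<Rightarrow> mv" where
  "herm p M = (\<lambda>A. cnj (M A) * blade_sign p A A)"

definition clN :: "nat \<Rightarrow> nat" where
  "clN n = 2 ^ ((n + 1) div 2)"

text \<open>Recursion: Mseq n p M j = M_(j+1); C_(k) = N/k <M_(k)>_0;
  M_(k+1) = M (M_(k) - C_(k) e).\<close>
fun Mseq :: "nat \<Rightarrow> nat \<Rightarrow> mv \<Rightarrow> nat \<Rightarrow> mv" where
  "Mseq n p M 0 = M"
| "Mseq n p M (Suc j) =
     (let c = of_nat (clN n) / of_nat (Suc j) * scalar_part (Mseq n p M j)
      in cl_mult n p M (\<lambda>A. Mseq n p M j A - c * cl_one A))"

definition char_coeff :: "nat \<Rightarrow> nat \<Rightarrow> mv \<Rightarrow> nat \<Rightarrow> complex" where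
  "char_coeff n p M k = of_nat (clN n) / of_nat k * scalar_part (Mseq n p M (k - 1))"

end

theory Submission
  imports Defs "Jordan_Normal_Form.Schur_Decomposition"
begin

text \<open>
  Tensoring with Pauli matrices produces, by induction on \<open>m\<close>, \<open>2m\<close> pairwise anticommuting
  Hermitian involutions of size \<open>N = 2\<^sup>m\<close>, \<open>m = \<lceil>n/2\<rceil>\<close>. Multiplying those of index
  \<open>\<ge> p\<close> by \<open>\<i>\<close> gives generators of signature \<open>(p, q)\<close> (plus a spare one when \<open>n\<close> is odd), hence
  an algebra homomorphism \<open>\<beta>\<close> into \<open>N \<times> N\<close> matrices with \<open>\<beta>(M\<^sup>\<dagger>) = \<beta>(M)\<^sup>*\<close>. Every blade
  \<open>e\<^sub>A \<noteq> e\<close> anticommutes with one of the \<open>2m\<close> generators and is therefore traceless, so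
  \<open>tr \<beta>(M) = N \<langle>M\<rangle>\<^sub>0\<close>. Thus \<open>\<beta>\<close> turns the recursion defining the \<open>C\<^sub>k\<close> into the
  Faddeev--LeVerrier recursion for \<open>\<beta>(M)\<close>, which (by Schur triangularisation and Newton's
  identities) yields \<open>C\<^sub>N(M) = -det \<beta>(M)\<close> as \<open>N\<close> is even. Consequently
  \<open>C\<^sub>N(M\<^sup>\<dagger>M) = -|det \<beta>(M)|\<^sup>2\<close>, while \<open>C\<^sub>1(M\<^sup>\<dagger>M) = N \<langle>M\<^sup>\<dagger>M\<rangle>\<^sub>0 = N \<Sum>\<^sub>A |m\<^sub>A|\<^sup>2\<close>.
\<close>

lemma eta_square: "eta p a * eta p a = 1"
  unfolding eta_def by auto

lemma blade_sign_empty_left [simp]: "blade_sign p {} B = 1"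
  unfolding blade_sign_def by simp

lemma blade_sign_empty_right [simp]: "blade_sign p A {} = 1"
  unfolding blade_sign_def by simp

lemma blade_sign_square: "blade_sign p A B * blade_sign p A B = 1"
proof -
  have "prod (eta p) (A \<inter> B) * prod (eta p) (A \<inter> B) = 1"
    by (simp add: prod.distrib[symmetric] eta_square)
  moreover have "((-1::complex) ^ k) * (-1) ^ k = 1" for k
    by (simp add: power_add[symmetric])
  ultimately show ?thesis
    unfolding blade_sign_def by (simp add: algebra_simps)
qed

lemma card_inversions_insert_left:
  assumes "finite A" "finite B" "a \<notin> A"
  shows "card {(x, y). x \<in> insert a A \<and> y \<in> B \<and> y < x} =
         card {(x, y). x \<in> A \<and> y \<in> B \<and> y < x} + card {y \<in> B. y < a}"
proof -
  have split: "{(x, y). x \<in> insert a A \<and> y \<in> B \<and> y < x} =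
      {(x, y). x \<in> A \<and> y \<in> B \<and> y < x} \<union> Pair a ` {y \<in> B. y < a}"
    by auto
  have "finite {(x, y). x \<in> A \<and> y \<in> B \<and> y < x}"
    by (rule finite_subset[of _ "A \<times> B"]) (use assms in auto)
  moreover have "card (Pair a ` {y \<in> B. y < a}) = card {y \<in> B. y < a}"
    by (rule card_image) (auto simp: inj_on_def)
  ultimately show ?thesis
    unfolding split using assms by (subst card_Un_disjoint) auto
qed

lemma blade_sign_singleton_left:
  "finite C \<Longrightarrow> blade_sign p {a} C = (-1) ^ card {y \<in> C. y < a} * (if a \<in> C then eta p a else 1)"
  using card_inversions_insert_left[of "{}" C a]
  by (auto simp: blade_sign_def Int_insert_left)

lemma blade_sign_singleton_right:
  "blade_sign p C {b} = (-1) ^ card {x \<in> C. b < x} * (if b \<in> C then eta p b else 1)"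
proof -
  have "{(x, y). x \<in> C \<and> y \<in> {b} \<and> y < x} = (\<lambda>x. (x, b)) ` {x \<in> C. b < x}"
    by auto
  then have "card {(x, y). x \<in> C \<and> y \<in> {b} \<and> y < x} = card {x \<in> C. b < x}"
    by (simp add: card_image inj_on_def)
  then show ?thesis
    by (auto simp: blade_sign_def Int_insert_right)
qed

lemma blade_sign_singleton_below:
  assumes "finite C" "\<forall>x \<in> C. a < x"
  shows "blade_sign p {a} C = 1"
proof -
  have below: "{y \<in> C. y < a} = {}" and "a \<notin> C"
    using assms(2) by auto
  then show ?thesis
    unfolding blade_sign_singleton_left[OF assms(1)] below by simp
qed

lemma blade_sign_singleton_insert_same:
  assumes "finite C" "\<forall>x \<in> C. a < x"
  shows "blade_sign p {a} (insert a C) = eta p a"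
proof -
  have "finite (insert a C)"
    using assms(1) by simp
  moreover have below: "{y \<in> insert a C. y < a} = {}"
    using assms(2) by auto
  ultimately show ?thesis
    unfolding blade_sign_singleton_left[OF \<open>finite (insert a C)\<close>] below by simp
qed

lemma blade_sign_singleton_insert_below:
  assumes "finite C" "c < a" "c \<notin> C"
  shows "blade_sign p {a} (insert c C) = - blade_sign p {a} C"
proof -
  have "{y \<in> insert c C. y < a} = insert c {y \<in> C. y < a}"
    using assms(2) by auto
  then show ?thesis
    using assms by (simp add: blade_sign_singleton_left)
qed

lemma blade_sign_singleton_swap:
  assumes "finite A"
  shows "blade_sign p {b} A = (-1) ^ card (A - {b}) * blade_sign p A {b}"
proof -
  let ?lt = "{y \<in> A. y < b}" and ?gt = "{x \<in> A. b < x}"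
  have "A - {b} = ?lt \<union> ?gt"
    by (auto simp: neq_iff)
  then have "card (A - {b}) = card ?lt + card ?gt"
    using assms by (simp add: card_Un_disjoint disjoint_iff)
  moreover have "(-1::complex) ^ card ?gt * (-1) ^ card ?gt = 1"
    by (simp flip: power_add)
  then have "(-1::complex) ^ card ?lt = (-1) ^ (card ?lt + card ?gt) * (-1) ^ card ?gt"
    by (simp add: power_add mult.assoc)
  ultimately show ?thesis
    using assms by (simp add: blade_sign_singleton_left blade_sign_singleton_right)
qed

lemma blade_sign_insert_min:
  assumes "finite A" "finite B" "\<forall>a \<in> A. b < a"
  shows "blade_sign p (insert b A) B = blade_sign p A B * blade_sign p {b} (sym_diff A B)"
proof -
  have "b \<notin> A"
    using assms(3) by blast
  have "{y \<in> sym_diff A B. y < b} = {y \<in> B. y < b}"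
    using assms(3) by auto
  then have sign_b: "blade_sign p {b} (sym_diff A B) =
      (-1) ^ card {y \<in> B. y < b} * (if b \<in> B then eta p b else 1)"
    using assms(1,2) \<open>b \<notin> A\<close> by (simp add: blade_sign_singleton_left)
  have "prod (eta p) (insert b A \<inter> B) = prod (eta p) (A \<inter> B) * (if b \<in> B then eta p b else 1)"
    using \<open>b \<notin> A\<close> assms(1) by (simp add: Int_insert_left mult.commute)
  then show ?thesis
    unfolding sign_b unfolding blade_sign_def card_inversions_insert_left[OF assms(1,2) \<open>b \<notin> A\<close>]
    by (simp add: power_add algebra_simps)
qed

lemma scalar_part_herm_mult:
  "scalar_part (cl_mult n p (herm p M) M) = of_real (\<Sum>A \<in> Pow {0..<n}. (cmod (M A))\<^sup>2)"
proof -
  have "cl_mult n p (herm p M) M {} =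
      (\<Sum>A \<in> Pow {0..<n}. \<Sum>B \<in> Pow {0..<n}. if B = A then blade_sign p A B * herm p M A * M B else 0)"
    unfolding cl_mult_def by (intro sum.cong refl) auto
  also have "\<dots> = (\<Sum>A \<in> Pow {0..<n}. blade_sign p A A * herm p M A * M A)"
    by simp
  also have "\<dots> = (\<Sum>A \<in> Pow {0..<n}. of_real ((cmod (M A))\<^sup>2))"
  proof (rule sum.cong)
    fix A
    have "blade_sign p A A * herm p M A * M A = (blade_sign p A A * blade_sign p A A) * (cnj (M A) * M A)"
      unfolding herm_def by (simp add: algebra_simps)
    also have "\<dots> = of_real ((cmod (M A))\<^sup>2)"
      using complex_norm_square[of "M A"] by (simp add: blade_sign_square mult.commute)
    finally show "blade_sign p A A * herm p M A * M A = of_real ((cmod (M A))\<^sup>2)" .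
  qed simp
  finally show ?thesis
    unfolding scalar_part_def by simp
qed

lemma char_coeff_1_herm_mult_eq_0_iff:
  "char_coeff n p (cl_mult n p (herm p M) M) 1 = 0 \<longleftrightarrow> (\<forall>A \<in> Pow {0..<n}. M A = 0)"
proof -
  have "char_coeff n p (cl_mult n p (herm p M) M) 1 = of_nat (clN n) * of_real (\<Sum>A \<in> Pow {0..<n}. (cmod (M A))\<^sup>2)"
    by (simp add: char_coeff_def scalar_part_herm_mult)
  then have "char_coeff n p (cl_mult n p (herm p M) M) 1 = 0 \<longleftrightarrow> (\<Sum>A \<in> Pow {0..<n}. (cmod (M A))\<^sup>2) = 0"
    by (simp only: mult_eq_0_iff of_real_eq_0_iff of_nat_eq_0_iff) (simp add: clN_def)
  also have "\<dots> \<longleftrightarrow> (\<forall>A \<in> Pow {0..<n}. M A = 0)"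
    by (simp add: sum_nonneg_eq_0_iff)
  finally show ?thesis .
qed

lemma smult_smult_mat [simp]: "a \<cdot>\<^sub>m (b \<cdot>\<^sub>m A) = (a * b :: 'a :: semigroup_mult) \<cdot>\<^sub>m A"
  by (rule eq_matI) (auto simp: mult.assoc)

lemma one_smult_mat [simp]: "(1 :: 'a :: monoid_mult) \<cdot>\<^sub>m A = A"
  by (rule eq_matI) auto

lemma anticomm_sym:
  fixes X Y :: "'a :: comm_ring_1 mat"
  assumes "X \<in> carrier_mat n n" "Y \<in> carrier_mat n n" "X * Y = (-1) \<cdot>\<^sub>m (Y * X)"
  shows "Y * X = (-1) \<cdot>\<^sub>m (X * Y)"
  using assms by simp

lemma mat_adjoint_eq_mat:
  "mat_adjoint A = mat (dim_col A) (dim_row A) (\<lambda>(i, j). conjugate (A $$ (j, i)))"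
  unfolding mat_adjoint_def by (rule eq_matI) (auto simp: mat_of_rows_index)

lemma dim_mat_adjoint [simp]:
  "dim_row (mat_adjoint A) = dim_col A" "dim_col (mat_adjoint A) = dim_row A"
  unfolding mat_adjoint_eq_mat by simp_all

lemma carrier_mat_adjoint [simp]: "A \<in> carrier_mat n m \<Longrightarrow> mat_adjoint A \<in> carrier_mat m n"
  unfolding mat_adjoint_eq_mat by auto

lemma index_mat_adjoint [simp]:
  "i < dim_col A \<Longrightarrow> j < dim_row A \<Longrightarrow> mat_adjoint A $$ (i, j) = conjugate (A $$ (j, i))"
  unfolding mat_adjoint_eq_mat by simp

lemma mat_adjoint_smult [simp]: "mat_adjoint (k \<cdot>\<^sub>m A) = conjugate k \<cdot>\<^sub>m mat_adjoint A"
  by (rule eq_matI) (auto simp: conjugate_dist_mul)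

lemma mat_adjoint_zero [simp]: "mat_adjoint (0\<^sub>m n m) = 0\<^sub>m m n"
  by (rule eq_matI) auto

lemma mat_adjoint_one [simp]: "mat_adjoint (1\<^sub>m n) = (1\<^sub>m n :: complex mat)"
  by (rule eq_matI) auto

lemma mat_adjoint_mult:
  fixes A B :: "'a :: conjugatable_field mat"
  assumes "A \<in> carrier_mat n k" "B \<in> carrier_mat k m"
  shows "mat_adjoint (A * B) = mat_adjoint B * mat_adjoint A"
  by (rule eq_matI)
    (use assms in \<open>auto simp: scalar_prod_def sum_conjugate conjugate_dist_mul mult.commute\<close>)

lemma mat_adjoint_four_block_mat:
  assumes "A \<in> carrier_mat d d" "B \<in> carrier_mat d d" "C \<in> carrier_mat d d" "D \<in> carrier_mat d d"
  shows "mat_adjoint (four_block_mat A B C D) =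
    four_block_mat (mat_adjoint A) (mat_adjoint C) (mat_adjoint B) (mat_adjoint D)"
  by (rule eq_matI) (use assms in auto)

lemma det_mat_adjoint:
  fixes A :: "complex mat"
  assumes "A \<in> carrier_mat n n"
  shows "det (mat_adjoint A) = cnj (det A)"
proof -
  interpret cnj_hom: comm_ring_hom cnj
    by unfold_locales auto
  have "mat_adjoint A = transpose_mat (cnj_hom.mat_hom A)"
    by (rule eq_matI) (use assms in auto)
  then show ?thesis
    using det_transpose[of "cnj_hom.mat_hom A" n] assms by simp
qed

definition trace :: "'a :: comm_ring_1 mat \<Rightarrow> 'a" where
  "trace A = (\<Sum>i < dim_row A. A $$ (i, i))"

lemma trace_mult_comm:
  assumes "A \<in> carrier_mat n m" "B \<in> carrier_mat m n"
  shows "trace (A * B) = trace (B * A)"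
proof -
  have "trace (A * B) = (\<Sum>i<n. \<Sum>j<m. A $$ (i, j) * B $$ (j, i))"
    unfolding trace_def using assms by (auto simp: scalar_prod_def atLeast0LessThan)
  also have "\<dots> = (\<Sum>j<m. \<Sum>i<n. B $$ (j, i) * A $$ (i, j))"
    by (subst sum.swap) (simp add: mult.commute)
  also have "\<dots> = trace (B * A)"
    unfolding trace_def using assms by (auto simp: scalar_prod_def atLeast0LessThan)
  finally show ?thesis .
qed

lemma trace_smult: "A \<in> carrier_mat n n \<Longrightarrow> trace (k \<cdot>\<^sub>m A) = k * trace A"
  unfolding trace_def by (simp add: sum_distrib_left)

lemma trace_eq_0_if_anticomm:
  fixes X G :: "complex mat"
  assumes X: "X \<in> carrier_mat n n" and G: "G \<in> carrier_mat n n"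
    and "G * G = e \<cdot>\<^sub>m 1\<^sub>m n" "e \<noteq> 0" and anticomm: "G * X = (-1) \<cdot>\<^sub>m (X * G)"
  shows "trace X = 0"
proof -
  have "trace (G * (G * X)) = e * trace X"
    using X G \<open>G * G = e \<cdot>\<^sub>m 1\<^sub>m n\<close> by (simp add: trace_smult[OF X] assoc_mult_mat[of _ n n _ n _ n, symmetric]
        mult_smult_assoc_mat[of _ n n _ n])
  moreover have "trace (G * (G * X)) = 0"
  proof -
    have "trace (G * (G * X)) = - trace (G * (X * G))"
      using anticomm X G by (simp add: mult_smult_distrib[of _ n n _ n] trace_smult[of _ n])
    also have "trace (G * (X * G)) = trace (G * (G * X))"
      using trace_mult_comm[of "G * X" n n G] X G by (simp add: assoc_mult_mat[of _ n n _ n _ n])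
    finally show ?thesis
      by simp
  qed
  ultimately show ?thesis
    using \<open>e \<noteq> 0\<close> by simp
qed

lemma upper_triangular_mult:
  assumes "A \<in> carrier_mat n n" "B \<in> carrier_mat n n" "upper_triangular A" "upper_triangular B"
  shows "upper_triangular (A * B)"
proof
  fix i j assume ji: "j < i" and "i < dim_row (A * B)"
  then have "i < n"
    using assms(1) by simp
  have "A $$ (i, k) * B $$ (k, j) = 0" if "k < n" for k
    using upper_triangularD[OF assms(3), of k i] upper_triangularD[OF assms(4), of j k] that ji \<open>i < n\<close>
      assms(1,2) by (cases "k < i") auto
  then show "(A * B) $$ (i, j) = 0"
    using assms(1,2) \<open>i < n\<close> ji by (auto simp: scalar_prod_def intro!: sum.neutral)
qed

lemma upper_triangular_mult_diag:
  assumes "A \<in> carrier_mat n n" "B \<in> carrier_mat n n" "upper_triangular A" "upper_triangular B"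
    and "i < n"
  shows "(A * B) $$ (i, i) = A $$ (i, i) * B $$ (i, i)"
proof -
  have "A $$ (i, k) * B $$ (k, i) = 0" if "k < n" "k \<noteq> i" for k
  proof (cases "k < i")
    case True
    then show ?thesis
      using upper_triangularD[OF assms(3) True] assms(1,5) by simp
  next
    case False
    then have "i < k"
      using that(2) by simp
    then show ?thesis
      using upper_triangularD[OF assms(4) \<open>i < k\<close>] assms(2) that(1) by simp
  qed
  then have "(\<Sum>k\<in>{..<n} - {i}. A $$ (i, k) * B $$ (k, i)) = 0"
    by (intro sum.neutral) auto
  moreover have "(A * B) $$ (i, i) = (\<Sum>k<n. A $$ (i, k) * B $$ (k, i))"
    using assms(1,2,5) by (simp add: scalar_prod_def atLeast0LessThan)
  ultimately show ?thesis
    using assms(5) by (simp add: sum.remove)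
qed

lemma upper_triangular_minus_smult_one:
  fixes A :: "'a :: comm_ring_1 mat"
  assumes "A \<in> carrier_mat n n" "upper_triangular A"
  shows "upper_triangular (A - c \<cdot>\<^sub>m 1\<^sub>m n)"
  by (rule upper_triangularI) (use assms in \<open>simp add: upper_triangularD\<close>)

section \<open>Newton's identities\<close>

fun elem_sym :: "'a :: comm_ring_1 list \<Rightarrow> nat \<Rightarrow> 'a" where
  "elem_sym [] k = (if k = 0 then 1 else 0)"
| "elem_sym (x # xs) k = elem_sym xs k + (if k = 0 then 0 else x * elem_sym xs (k - 1))"

definition power_sum :: "'a :: comm_ring_1 list \<Rightarrow> nat \<Rightarrow> 'a" where
  "power_sum xs k = sum_list (map (\<lambda>x. x ^ k) xs)"

lemma elem_sym_0 [simp]: "elem_sym xs 0 = 1"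
  by (induction xs) auto

lemma elem_sym_above_length: "length xs < k \<Longrightarrow> elem_sym xs k = 0"
  by (induction xs arbitrary: k) auto

lemma elem_sym_length: "elem_sym xs (length xs) = prod_list xs"
  by (induction xs) (auto simp: elem_sym_above_length)

lemma elem_sym_Cons_telescope:
  "(\<Sum>l\<le>k. (-1) ^ l * elem_sym (x # xs) l * x ^ (Suc k - l)) = (-1) ^ k * elem_sym xs k * x"
proof -
  define u where "u l = (-1) ^ l * elem_sym xs l * x ^ (Suc k - l)" for l
  have "(-1) ^ l * elem_sym (x # xs) l * x ^ (Suc k - l) = u l - (if l = 0 then 0 else u (l - 1))"
    if "l \<le> k" for l
  proof (cases l)
    case (Suc l')
    then have "Suc k - l' = Suc (Suc k - l)"
      using that by simp
    then show ?thesis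
      unfolding u_def Suc by (simp add: algebra_simps)
  qed (simp add: u_def)
  then have "(\<Sum>l\<le>k. (-1) ^ l * elem_sym (x # xs) l * x ^ (Suc k - l)) =
      (\<Sum>l\<le>k. u l - (if l = 0 then 0 else u (l - 1)))"
    by (intro sum.cong) auto
  also have "\<dots> = u k"
    by (induction k) auto
  finally show ?thesis
    unfolding u_def by simp
qed

lemma newton_identity:
  fixes xs :: "'a :: comm_ring_1 list"
  shows "(\<Sum>l\<le>k. (-1) ^ l * elem_sym xs l * power_sum xs (Suc k - l))
    + (-1) ^ Suc k * of_nat (Suc k) * elem_sym xs (Suc k) = 0"
proof (induction xs arbitrary: k)
  case Nil
  then show ?case
    unfolding power_sum_def by simp
next
  case (Cons x xs)
  let ?e = "elem_sym xs" and ?p = "power_sum xs"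
  define e_shift where "e_shift l = (if l = 0 then 0 else ?e (l - 1))" for l
  have e_Cons: "elem_sym (x # xs) l = ?e l + x * e_shift l" for l
    unfolding e_shift_def by simp
  have shifted: "(\<Sum>l\<le>k. (-1) ^ l * (x * e_shift l) * ?p (Suc k - l)) = x * (-1) ^ k * of_nat k * ?e k"
  proof (cases k)
    case 0
    then show ?thesis
      unfolding e_shift_def by simp
  next
    case (Suc k')
    have "(\<Sum>l\<le>k. (-1) ^ l * (x * e_shift l) * ?p (Suc k - l)) =
        - x * (\<Sum>l\<le>k'. (-1) ^ l * ?e l * ?p (Suc k' - l))"
      unfolding Suc by (subst sum.atMost_Suc_shift) (simp add: e_shift_def sum_distrib_left algebra_simps)
    also have "\<dots> = x * ((-1) ^ Suc k' * of_nat (Suc k') * ?e (Suc k'))"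
      using Cons.IH[of k'] by (simp add: eq_neg_iff_add_eq_0)
    finally show ?thesis
      unfolding Suc by simp
  qed
  have "(\<Sum>l\<le>k. (-1) ^ l * elem_sym (x # xs) l * power_sum (x # xs) (Suc k - l)) =
      (\<Sum>l\<le>k. (-1) ^ l * ?e l * ?p (Suc k - l)) + (\<Sum>l\<le>k. (-1) ^ l * (x * e_shift l) * ?p (Suc k - l))
      + (\<Sum>l\<le>k. (-1) ^ l * elem_sym (x # xs) l * x ^ (Suc k - l))"
    unfolding power_sum_def e_Cons by (simp add: algebra_simps sum.distrib del: elem_sym.simps)
  also have "\<dots> = - ((-1) ^ Suc k * of_nat (Suc k) * ?e (Suc k)) + x * (-1) ^ k * of_nat k * ?e k
      + (-1) ^ k * ?e k * x"
    unfolding shifted elem_sym_Cons_telescope using Cons.IH[of k] by (simp add: eq_neg_iff_add_eq_0)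
  finally show ?case
    unfolding e_Cons[of "Suc k"] e_shift_def by (simp add: algebra_simps)
qed

lemma newton_recursion_unique:
  fixes xs :: "'a :: field_char_0 list"
  assumes "a 0 = 1"
    and rec: "\<And>j. - of_nat (Suc j) * a (Suc j) = (\<Sum>l\<le>j. a l * power_sum xs (Suc j - l))"
  shows "a k = (-1) ^ k * elem_sym xs k"
proof (induction k rule: less_induct)
  case (less k)
  show ?case
  proof (cases k)
    case 0
    then show ?thesis
      using assms(1) by simp
  next
    case (Suc j)
    have "- of_nat (Suc j) * a (Suc j) = (\<Sum>l\<le>j. (-1) ^ l * elem_sym xs l * power_sum xs (Suc j - l))"
      unfolding rec using less Suc by (intro sum.cong) auto
    also have "\<dots> = - of_nat (Suc j) * ((-1) ^ Suc j * elem_sym xs (Suc j))"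
      using newton_identity[of xs j] by (simp add: eq_neg_iff_add_eq_0) (simp add: algebra_simps)
    finally have "of_nat (Suc j) * a (Suc j) = of_nat (Suc j) * ((-1) ^ Suc j * elem_sym xs (Suc j))"
      by (simp only: mult_minus_left neg_equal_iff_equal)
    then show ?thesis
      unfolding Suc mult_cancel_left of_nat_eq_0_iff by simp
  qed
qed

section \<open>The Faddeev--LeVerrier recursion\<close>

lemma faddeev_leverrier_upper_triangular:
  fixes T :: "'a :: comm_ring_1 mat"
  assumes T: "T \<in> carrier_mat n n" "upper_triangular T"
    and Ts_0: "Ts 0 = T" and Ts_Suc: "\<And>j. Ts (Suc j) = T * (Ts j - c (Suc j) \<cdot>\<^sub>m 1\<^sub>m n)"
  shows "Ts j \<in> carrier_mat n n \<and> upper_triangular (Ts j) \<and>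
    (\<forall>i<n. Ts j $$ (i, i) = (\<Sum>l\<le>j. (if l = 0 then 1 else - c l) * T $$ (i, i) ^ (Suc j - l)))"
proof (induction j)
  case 0
  then show ?case
    using T by (simp add: Ts_0)
next
  case (Suc j)
  let ?a = "\<lambda>l. if l = 0 then 1 else - c l"
  let ?X = "Ts j - c (Suc j) \<cdot>\<^sub>m 1\<^sub>m n"
  have X: "?X \<in> carrier_mat n n" "upper_triangular ?X"
    using Suc.IH by (auto simp: upper_triangular_minus_smult_one)
  have "(T * ?X) $$ (i, i) = (\<Sum>l\<le>Suc j. ?a l * T $$ (i, i) ^ (Suc (Suc j) - l))" if "i < n" for i
  proof -
    let ?x = "T $$ (i, i)"
    have "(\<Sum>l\<le>j. ?x * (?a l * ?x ^ (Suc j - l))) = (\<Sum>l\<le>j. ?a l * ?x ^ (Suc (Suc j) - l))"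
      by (intro sum.cong) (auto simp: Suc_diff_le algebra_simps)
    then show ?thesis
      using upper_triangular_mult_diag[OF T(1) X(1) T(2) X(2) that] Suc.IH that
      by (simp add: sum_distrib_left algebra_simps)
  qed
  then show ?case
    using upper_triangular_mult[OF T(1) X(1) T(2) X(2)] T(1) X(1) by (simp add: Ts_Suc)
qed

lemma faddeev_leverrier_trace_upper_triangular:
  fixes T :: "'a :: comm_ring_1 mat"
  assumes T: "T \<in> carrier_mat n n" "upper_triangular T"
    and Ts_0: "Ts 0 = T" and Ts_Suc: "\<And>j. Ts (Suc j) = T * (Ts j - c (Suc j) \<cdot>\<^sub>m 1\<^sub>m n)"
  shows "trace (Ts j) = (\<Sum>l\<le>j. (if l = 0 then 1 else - c l) * power_sum (diag_mat T) (Suc j - l))"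
proof -
  let ?a = "\<lambda>l. if l = 0 then 1 else - c l"
  note Ts = faddeev_leverrier_upper_triangular[where Ts = Ts and c = c, OF T Ts_0 Ts_Suc, of j]
  have "trace (Ts j) = (\<Sum>i<n. \<Sum>l\<le>j. ?a l * T $$ (i, i) ^ (Suc j - l))"
    unfolding trace_def using Ts by (auto intro: sum.cong)
  also have "\<dots> = (\<Sum>l\<le>j. ?a l * (\<Sum>i<n. T $$ (i, i) ^ (Suc j - l)))"
    unfolding sum_distrib_left by (rule sum.swap)
  also have "\<dots> = (\<Sum>l\<le>j. ?a l * power_sum (diag_mat T) (Suc j - l))"
    using T(1) by (simp add: power_sum_def diag_mat_def sum_list_sum_nth atLeast0LessThan)
  finally show ?thesis .
qed

lemma faddeev_leverrier_similar:
  assumes B: "B \<in> carrier_mat n n" and sim: "similar_mat_wit B T P Q"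
    and Bs_0: "Bs 0 = B" and Bs_Suc: "\<And>j. Bs (Suc j) = B * (Bs j - c (Suc j) \<cdot>\<^sub>m 1\<^sub>m n)"
  shows "Q * (Bs 0 * P) = T"
    and "Q * (Bs (Suc j) * P) = T * (Q * (Bs j * P) - c (Suc j) \<cdot>\<^sub>m 1\<^sub>m n)"
    and "trace (Q * (Bs j * P)) = trace (Bs j)"
proof -
  note wit = similar_mat_witD2[OF B sim]
  have carrier: "T \<in> carrier_mat n n" "P \<in> carrier_mat n n" "Q \<in> carrier_mat n n"
    using wit by auto
  note [simp] = assoc_mult_mat[of _ n n _ n _ n]
  have cancel: "Q * (P * Z) = Z" "P * (Q * Z) = Z" if "Z \<in> carrier_mat n n" for Z
    using that carrier wit(1,2) by (simp_all flip: assoc_mult_mat[of _ n n _ n _ n])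
  have Bs_carrier: "Bs j \<in> carrier_mat n n" for j
    by (induction j) (use B in \<open>auto simp: Bs_0 Bs_Suc intro: mult_carrier_mat\<close>)
  show "Q * (Bs 0 * P) = T"
    unfolding Bs_0 wit(3) using carrier by (simp add: cancel wit(2))
  let ?X = "Bs j - c (Suc j) \<cdot>\<^sub>m 1\<^sub>m n" and ?Y = "Q * (Bs j * P) - c (Suc j) \<cdot>\<^sub>m 1\<^sub>m n"
  have XY: "?X \<in> carrier_mat n n" "?Y \<in> carrier_mat n n"
    using carrier Bs_carrier[of j] by auto
  have "?X * P = P * ?Y"
    using carrier Bs_carrier[of j]
    by (simp add: minus_mult_distrib_mat[of _ n n _ _ n] mult_minus_distrib_mat[of _ n n _ n]
        mult_smult_assoc_mat[of _ n n _ n] mult_smult_distrib[of _ n n _ n] cancel)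
  then show "Q * (Bs (Suc j) * P) = T * ?Y"
    unfolding Bs_Suc wit(3) using carrier XY by (simp add: cancel)
  show "trace (Q * (Bs j * P)) = trace (Bs j)"
    using trace_mult_comm[of Q n n "Bs j * P"] carrier Bs_carrier[of j] by (simp add: wit(1))
qed

theorem faddeev_leverrier_det:
  fixes B :: "complex mat"
  assumes B: "B \<in> carrier_mat n n" and "0 < n"
    and Bs_0: "Bs 0 = B" and Bs_Suc: "\<And>j. Bs (Suc j) = B * (Bs j - c (Suc j) \<cdot>\<^sub>m 1\<^sub>m n)"
    and trace_Bs: "\<And>j. of_nat (Suc j) * c (Suc j) = trace (Bs j)"
  shows "c n = - ((-1) ^ n * det B)"
proof -
  obtain es where char_poly: "char_poly B = (\<Prod>a\<leftarrow>es. [:- a, 1:])"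
    using char_poly_factorized[OF B] by blast
  obtain T P Q where "schur_decomposition B es = (T, P, Q)"
    by (cases "schur_decomposition B es") auto
  with schur_decomposition[OF B char_poly] have sim: "similar_mat_wit B T P Q"
    and T_ut: "upper_triangular T" and T_diag: "diag_mat T = es"
    by auto
  note wit = similar_mat_witD2[OF B sim]
  have T: "T \<in> carrier_mat n n"
    using wit by auto
  define a where "a l = (if l = 0 then 1 else - c l)" for l
  note similar = faddeev_leverrier_similar[where Bs = Bs and c = c, OF B sim Bs_0 Bs_Suc]
  have "trace (Bs j) = (\<Sum>l\<le>j. a l * power_sum es (Suc j - l))" for j
    using faddeev_leverrier_trace_upper_triangular[where Ts = "\<lambda>j. Q * (Bs j * P)", OF T T_ut similar(1,2)]
      similar(3) T_diag
    by (simp add: a_def)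
  then have a_eq: "a l = (-1) ^ l * elem_sym es l" for l
    using trace_Bs by (intro newton_recursion_unique) (simp_all add: a_def algebra_simps)
  have "length es = n"
    using T T_diag by (auto simp: diag_mat_def)
  have "c n = - a n"
    using \<open>0 < n\<close> by (simp add: a_def)
  also have "a n = (-1) ^ n * prod_list es"
    using a_eq[of n] elem_sym_length[of es] unfolding \<open>length es = n\<close> by simp
  also have "prod_list es = det T"
    using det_upper_triangular[OF T_ut T] T_diag by simp
  also have "det T = det B"
    using det_similar sim unfolding similar_mat_def by metis
  finally show ?thesis .
qed

section \<open>Clifford representations by gamma matrices\<close>

locale clifford_rep =
  fixes N K p :: nat and g :: "nat \<Rightarrow> complex mat"
  assumes gen_carrier: "a < K \<Longrightarrow> g a \<in> carrier_mat N N"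
    and gen_square: "a < K \<Longrightarrow> g a * g a = eta p a \<cdot>\<^sub>m 1\<^sub>m N"
    and gen_anticomm: "a < K \<Longrightarrow> b < K \<Longrightarrow> a \<noteq> b \<Longrightarrow> g a * g b = (-1) \<cdot>\<^sub>m (g b * g a)"

locale unitary_clifford_rep = clifford_rep +
  assumes gen_adjoint: "a < K \<Longrightarrow> mat_adjoint (g a) = eta p a \<cdot>\<^sub>m g a"

text \<open>Generators of \<open>Cl(2m+2)\<close> from those of \<open>Cl(2m)\<close>: \<open>\<sigma>\<^sub>z \<otimes> \<gamma>\<^sub>a\<close>, \<open>\<sigma>\<^sub>x \<otimes> 1\<close> and \<open>\<sigma>\<^sub>y \<otimes> 1\<close>.\<close>

definition gamma_diag :: "nat \<Rightarrow> complex mat \<Rightarrow> complex mat" where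
  "gamma_diag d A = four_block_mat A (0\<^sub>m d d) (0\<^sub>m d d) ((-1) \<cdot>\<^sub>m A)"

definition gamma_x :: "nat \<Rightarrow> complex mat" where
  "gamma_x d = four_block_mat (0\<^sub>m d d) (1\<^sub>m d) (1\<^sub>m d) (0\<^sub>m d d)"

definition gamma_y :: "nat \<Rightarrow> complex mat" where
  "gamma_y d = four_block_mat (0\<^sub>m d d) ((- \<i>) \<cdot>\<^sub>m 1\<^sub>m d) (\<i> \<cdot>\<^sub>m 1\<^sub>m d) (0\<^sub>m d d)"

lemma gamma_carrier [simp]:
  "A \<in> carrier_mat d d \<Longrightarrow> gamma_diag d A \<in> carrier_mat (d + d) (d + d)"
  "gamma_x d \<in> carrier_mat (d + d) (d + d)" "gamma_y d \<in> carrier_mat (d + d) (d + d)"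
  unfolding gamma_diag_def gamma_x_def gamma_y_def by auto

lemma gamma_square:
  "A \<in> carrier_mat d d \<Longrightarrow> A * A = 1\<^sub>m d \<Longrightarrow> gamma_diag d A * gamma_diag d A = 1\<^sub>m (d + d)"
  "gamma_x d * gamma_x d = 1\<^sub>m (d + d)" "gamma_y d * gamma_y d = 1\<^sub>m (d + d)"
  unfolding gamma_diag_def gamma_x_def gamma_y_def
  by (simp_all add: mult_four_block_mat[of _ d d _ d _ d _ _ d _ d] mult_smult_assoc_mat[of _ d d _ d] mult_smult_distrib[of _ d d _ d])

lemma gamma_diag_anticomm:
  assumes "A \<in> carrier_mat d d" "B \<in> carrier_mat d d" "A * B = (-1) \<cdot>\<^sub>m (B * A)"
  shows "gamma_diag d A * gamma_diag d B = (-1) \<cdot>\<^sub>m (gamma_diag d B * gamma_diag d A)"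
  unfolding gamma_diag_def using assms
  by (simp add: mult_four_block_mat[of _ d d _ d _ d _ _ d _ d] smult_four_block_mat[of _ d d _ d _ d]
      mult_smult_assoc_mat[of _ d d _ d] mult_smult_distrib[of _ d d _ d])

lemma gamma_diag_xy_anticomm:
  assumes "A \<in> carrier_mat d d"
  shows "gamma_diag d A * gamma_x d = (-1) \<cdot>\<^sub>m (gamma_x d * gamma_diag d A)"
    and "gamma_diag d A * gamma_y d = (-1) \<cdot>\<^sub>m (gamma_y d * gamma_diag d A)"
  unfolding gamma_diag_def gamma_x_def gamma_y_def using assms
  by (simp_all add: mult_four_block_mat[of _ d d _ d _ d _ _ d _ d] smult_four_block_mat[of _ d d _ d _ d]
      mult_smult_assoc_mat[of _ d d _ d] mult_smult_distrib[of _ d d _ d])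

lemma gamma_x_y_anticomm: "gamma_x d * gamma_y d = (-1) \<cdot>\<^sub>m (gamma_y d * gamma_x d)"
  unfolding gamma_x_def gamma_y_def
  by (simp add: mult_four_block_mat[of _ d d _ d _ d _ _ d _ d] smult_four_block_mat[of _ d d _ d _ d])

lemma gamma_adjoint:
  "A \<in> carrier_mat d d \<Longrightarrow> mat_adjoint A = A \<Longrightarrow> mat_adjoint (gamma_diag d A) = gamma_diag d A"
  "mat_adjoint (gamma_x d) = gamma_x d" "mat_adjoint (gamma_y d) = gamma_y d"
  unfolding gamma_diag_def gamma_x_def gamma_y_def
  by (simp_all add: mat_adjoint_four_block_mat[of _ d])

definition gamma_step :: "nat \<Rightarrow> nat \<Rightarrow> (nat \<Rightarrow> complex mat) \<Rightarrow> nat \<Rightarrow> complex mat" where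
  "gamma_step m d G a = (if a < 2 * m then gamma_diag d (G a) else if a = 2 * m then gamma_x d else gamma_y d)"

lemma gamma_step_anticomm:
  assumes "clifford_rep d (2 * m) (2 * m) G" "a < b" "b < 2 * Suc m"
  shows "gamma_step m d G a * gamma_step m d G b = (-1) \<cdot>\<^sub>m (gamma_step m d G b * gamma_step m d G a)"
proof -
  interpret G: clifford_rep d "2 * m" "2 * m" G
    by (rule assms(1))
  have "b < 2 * m \<or> (a < 2 * m \<and> b = 2 * m) \<or> (a < 2 * m \<and> b = 2 * m + 1) \<or> (a = 2 * m \<and> b = 2 * m + 1)"
    using assms(2,3) by presburger
  then consider "b < 2 * m" | "a < 2 * m" "b = 2 * m" | "a < 2 * m" "b = 2 * m + 1" | "a = 2 * m" "b = 2 * m + 1"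
    by blast
  then show ?thesis
  proof cases
    case 1
    then show ?thesis
      using assms(2) gamma_diag_anticomm[OF G.gen_carrier G.gen_carrier G.gen_anticomm[of a b]]
      by (simp add: gamma_step_def)
  next
    case 2
    then show ?thesis
      using gamma_diag_xy_anticomm(1)[OF G.gen_carrier] by (simp add: gamma_step_def)
  next
    case 3
    then show ?thesis
      using gamma_diag_xy_anticomm(2)[OF G.gen_carrier] by (simp add: gamma_step_def)
  next
    case 4
    then show ?thesis
      using gamma_x_y_anticomm by (simp add: gamma_step_def)
  qed
qed

lemma unitary_clifford_rep_gamma_step:
  assumes "unitary_clifford_rep d (2 * m) (2 * m) G"
  shows "unitary_clifford_rep (d + d) (2 * Suc m) (2 * Suc m) (gamma_step m d G)"
proof -
  interpret G: unitary_clifford_rep d "2 * m" "2 * m" G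
    by (rule assms)
  have G: "G a \<in> carrier_mat d d" "G a * G a = 1\<^sub>m d" "mat_adjoint (G a) = G a" if "a < 2 * m" for a
    using G.gen_carrier[OF that] G.gen_square[OF that] G.gen_adjoint[OF that] that by (simp_all add: eta_def)
  have carrier: "gamma_step m d G a \<in> carrier_mat (d + d) (d + d)" for a
    using G(1) by (simp add: gamma_step_def)
  show ?thesis
  proof unfold_locales
    fix a assume a: "a < 2 * Suc m"
    show "gamma_step m d G a \<in> carrier_mat (d + d) (d + d)"
      by (rule carrier)
    show "gamma_step m d G a * gamma_step m d G a = eta (2 * Suc m) a \<cdot>\<^sub>m 1\<^sub>m (d + d)"
      using G a by (simp add: gamma_step_def eta_def gamma_square)
    show "mat_adjoint (gamma_step m d G a) = eta (2 * Suc m) a \<cdot>\<^sub>m gamma_step m d G a"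
      using G a by (simp add: gamma_step_def eta_def gamma_adjoint)
    fix b assume b: "b < 2 * Suc m" and "a \<noteq> b"
    then consider "a < b" | "b < a"
      by linarith
    then show "gamma_step m d G a * gamma_step m d G b = (-1) \<cdot>\<^sub>m (gamma_step m d G b * gamma_step m d G a)"
      using gamma_step_anticomm[OF G.clifford_rep_axioms] a b anticomm_sym[OF carrier carrier] by cases blast+
  qed
qed

lemma gamma_matrices_exist: "\<exists>G. unitary_clifford_rep (2 ^ m) (2 * m) (2 * m) G"
proof (induction m)
  case 0
  show ?case
    by (rule exI[of _ "\<lambda>_. 1\<^sub>m 1"]) (unfold_locales, auto)
next
  case (Suc m)
  then obtain G where "unitary_clifford_rep (2 ^ m) (2 * m) (2 * m) G"
    by blast
  then have "unitary_clifford_rep (2 ^ m + 2 ^ m) (2 * Suc m) (2 * Suc m) (gamma_step m (2 ^ m) G)"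
    by (rule unitary_clifford_rep_gamma_step)
  then show ?case
    by (auto simp: mult_2)
qed

lemma unitary_clifford_rep_signature:
  assumes "unitary_clifford_rep N K K G"
  shows "unitary_clifford_rep N K p (\<lambda>a. if a < p then G a else \<i> \<cdot>\<^sub>m G a)"
proof -
  interpret G: unitary_clifford_rep N K K G
    by (rule assms)
  have G: "G a \<in> carrier_mat N N" "G a * G a = 1\<^sub>m N" "mat_adjoint (G a) = G a" if "a < K" for a
    using G.gen_carrier[OF that] G.gen_square[OF that] G.gen_adjoint[OF that] that
    by (simp_all add: eta_def)
  define s where "s a = (if a < p then 1 else \<i>)" for a
  have twist: "(if a < p then G a else \<i> \<cdot>\<^sub>m G a) = s a \<cdot>\<^sub>m G a" for a
    by (simp add: s_def)
  show ?thesis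
    unfolding twist
  proof unfold_locales
    fix a assume a: "a < K"
    show "s a \<cdot>\<^sub>m G a \<in> carrier_mat N N"
      using G(1)[OF a] by simp
    show "s a \<cdot>\<^sub>m G a * (s a \<cdot>\<^sub>m G a) = eta p a \<cdot>\<^sub>m 1\<^sub>m N"
      using G[OF a] by (simp add: mult_smult_assoc_mat[of _ N N _ N] mult_smult_distrib[of _ N N _ N] s_def eta_def)
    show "mat_adjoint (s a \<cdot>\<^sub>m G a) = eta p a \<cdot>\<^sub>m (s a \<cdot>\<^sub>m G a)"
      using G[OF a] by (simp add: s_def eta_def)
    fix b assume b: "b < K" and "a \<noteq> b"
    then show "s a \<cdot>\<^sub>m G a * (s b \<cdot>\<^sub>m G b) = (-1) \<cdot>\<^sub>m (s b \<cdot>\<^sub>m G b * (s a \<cdot>\<^sub>m G a))"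
      using G(1)[OF a] G(1)[OF b] G.gen_anticomm[OF a b]
      by (simp add: mult_smult_assoc_mat[of _ N N _ N] mult_smult_distrib[of _ N N _ N] mult.commute)
  qed
qed

context clifford_rep
begin

definition blade :: "nat set \<Rightarrow> complex mat" where
  "blade A = foldr (\<lambda>a X. g a * X) (sorted_list_of_set A) (1\<^sub>m N)"

lemma blade_empty [simp]: "blade {} = 1\<^sub>m N"
  by (simp add: blade_def)

lemma blade_insert_min: "finite A \<Longrightarrow> \<forall>a \<in> A. b < a \<Longrightarrow> blade (insert b A) = g b * blade A"
  by (auto simp: blade_def insort_is_Cons less_imp_le)

lemma blade_carrier: "finite A \<Longrightarrow> A \<subseteq> {..<K} \<Longrightarrow> blade A \<in> carrier_mat N N"
  by (induction A rule: finite_linorder_min_induct) (auto simp: blade_insert_min intro!: mult_carrier_mat[OF gen_carrier])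

lemma blade_singleton: "a < K \<Longrightarrow> blade {a} = g a"
  using blade_insert_min[of "{}" a] gen_carrier[of a] by simp

lemma gen_square_mult_blade:
  assumes "finite C" "\<forall>x \<in> C. a < x" "insert a C \<subseteq> {..<K}"
  shows "g a * blade (insert a C) = eta p a \<cdot>\<^sub>m blade C"
proof -
  have ga: "g a \<in> carrier_mat N N" and C: "blade C \<in> carrier_mat N N"
    using assms by (auto simp: gen_carrier blade_carrier)
  have "g a * blade (insert a C) = (g a * g a) * blade C"
    using assms ga C by (simp add: blade_insert_min assoc_mult_mat[of _ N N _ N _ N])
  then show ?thesis
    using gen_square assms(3) C by (simp add: mult_smult_assoc_mat[of _ N N _ N])
qed

lemma gen_mult_blade:
  "finite C \<Longrightarrow> C \<subseteq> {..<K} \<Longrightarrow> a < K \<Longrightarrow> g a * blade C = blade_sign p {a} C \<cdot>\<^sub>m blade (sym_diff {a} C)"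
proof (induction C rule: finite_linorder_min_induct)
  case empty
  then show ?case
    using gen_carrier[of a] by (simp add: blade_singleton)
next
  case (insert c C)
  have ga: "g a \<in> carrier_mat N N" and gc: "g c \<in> carrier_mat N N" and C: "blade C \<in> carrier_mat N N"
    using insert.prems insert.hyps(1) by (auto simp: gen_carrier blade_carrier)
  have "c \<notin> C"
    using insert.hyps(2) by blast
  consider "a < c" | "a = c" | "c < a"
    by linarith
  then show ?case
  proof cases
    case 1
    then have "sym_diff {a} (insert c C) = insert a (insert c C)" "\<forall>x \<in> insert c C. a < x"
      using insert.hyps(2) by auto
    then show ?thesis
      using insert.hyps(1) by (simp add: blade_sign_singleton_below blade_insert_min)
  next
    case 2
    then have "sym_diff {a} (insert c C) = C"
      using \<open>c \<notin> C\<close> by auto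
    then show ?thesis
      using 2 insert gen_square_mult_blade by (simp add: blade_sign_singleton_insert_same)
  next
    case 3
    let ?D = "sym_diff {a} C"
    have D: "finite ?D" "?D \<subseteq> {..<K}" "\<forall>x \<in> ?D. c < x" "sym_diff {a} (insert c C) = insert c ?D"
      using insert.hyps insert.prems 3 \<open>c \<notin> C\<close> by auto
    have "g a * blade (insert c C) = (g a * g c) * blade C"
      using insert.hyps ga gc C by (simp add: blade_insert_min assoc_mult_mat[of _ N N _ N _ N])
    also have "\<dots> = (-1) \<cdot>\<^sub>m (g c * (g a * blade C))"
      using gen_anticomm[of a c] 3 insert.prems ga gc C
      by (simp add: mult_smult_assoc_mat[of _ N N _ N] assoc_mult_mat[of _ N N _ N _ N])
    also have "\<dots> = (- blade_sign p {a} C) \<cdot>\<^sub>m (g c * blade ?D)"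
      using insert.IH insert.prems gc blade_carrier[OF D(1,2)] by (simp add: mult_smult_distrib[of _ N N _ N])
    finally show ?thesis
      using D blade_sign_singleton_insert_below[OF insert.hyps(1) 3 \<open>c \<notin> C\<close>] by (simp add: blade_insert_min)
  qed
qed

lemma blade_mult:
  assumes "finite A" "A \<subseteq> {..<K}" "finite B" "B \<subseteq> {..<K}"
  shows "blade A * blade B = blade_sign p A B \<cdot>\<^sub>m blade (sym_diff A B)"
  using assms(1,2)
proof (induction A rule: finite_linorder_min_induct)
  case empty
  then show ?case
    using blade_carrier[OF assms(3,4)] by simp
next
  case (insert b A)
  let ?X = "sym_diff A B"
  have X: "finite ?X" "?X \<subseteq> {..<K}" "sym_diff {b} ?X = sym_diff (insert b A) B"
    using insert assms(3,4) by auto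
  have gb: "g b \<in> carrier_mat N N"
    using insert.prems gen_carrier by auto
  have "blade (insert b A) * blade B = g b * (blade A * blade B)"
    using insert gb blade_carrier assms(3,4)
    by (simp add: blade_insert_min assoc_mult_mat[of _ N N _ N _ N])
  also have "\<dots> = blade_sign p A B \<cdot>\<^sub>m (g b * blade ?X)"
    using insert gb blade_carrier[OF X(1,2)] by (simp add: mult_smult_distrib[of _ N N _ N])
  also have "\<dots> = (blade_sign p A B * blade_sign p {b} ?X) \<cdot>\<^sub>m blade (sym_diff (insert b A) B)"
    using gen_mult_blade[OF X(1,2)] insert.prems X(3) by simp
  finally show ?case
    using blade_sign_insert_min[OF insert.hyps(1) assms(3) insert.hyps(2)] by simp
qed

lemma gen_anticomm_blade:
  assumes "finite A" "A \<subseteq> {..<K}" "b < K" and odd: "odd (card (A - {b}))"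
  shows "g b * blade A = (-1) \<cdot>\<^sub>m (blade A * g b)"
proof -
  have "blade A * g b = blade_sign p A {b} \<cdot>\<^sub>m blade (sym_diff {b} A)"
    using blade_mult[OF assms(1,2), of "{b}"] assms(3) by (simp add: blade_singleton Un_commute)
  moreover have "blade_sign p {b} A = - blade_sign p A {b}"
    using blade_sign_singleton_swap[OF assms(1), of p b] odd by simp
  ultimately show ?thesis
    using gen_mult_blade[OF assms(1-3)] by simp
qed

lemma trace_blade:
  assumes "finite A" "A \<subseteq> {..<K}" "A \<noteq> {}" "even K"
  shows "trace (blade A) = 0"
proof -
  obtain b where b: "b < K" and odd: "odd (card (A - {b}))"
  proof (cases "even (card A)")
    case True
    obtain b where "b \<in> A"
      using assms(3) by auto
    then show ?thesis
      using that[of b] True assms(1,2) card_gt_0_iff[of A] by auto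
  next
    case False
    then obtain b where "b < K" "b \<notin> A"
      using assms(2,4) by (metis card_lessThan lessThan_iff subsetI subset_antisym)
    then show ?thesis
      using that[of b] False by simp
  qed
  show ?thesis
    using gen_square[OF b]
    by (rule trace_eq_0_if_anticomm[OF blade_carrier[OF assms(1,2)] gen_carrier[OF b]])
      (simp_all add: eta_def gen_anticomm_blade[OF assms(1,2) b odd])
qed

section \<open>The matrix representation \<open>\<beta>\<close>\<close>

definition beta :: "nat \<Rightarrow> mv \<Rightarrow> complex mat" where
  "beta n X = mat N N (\<lambda>(i, j). \<Sum>A \<in> Pow {0..<n}. X A * blade A $$ (i, j))"

lemma beta_carrier [simp]: "beta n X \<in> carrier_mat N N"
  by (simp add: beta_def)

lemma dim_beta [simp]: "dim_row (beta n X) = N" "dim_col (beta n X) = N"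
  by (simp_all add: beta_def)

lemma beta_index: "i < N \<Longrightarrow> j < N \<Longrightarrow> beta n X $$ (i, j) = (\<Sum>A \<in> Pow {0..<n}. X A * blade A $$ (i, j))"
  by (simp add: beta_def)

lemma Pow_subset_generators:
  assumes "n \<le> K" "A \<in> Pow {0..<n}"
  shows "finite A" "A \<subseteq> {..<K}"
proof -
  have "A \<subseteq> {0..<n}"
    using assms(2) by simp
  then show "finite A"
    by (rule finite_subset) simp
  show "A \<subseteq> {..<K}"
    using \<open>A \<subseteq> {0..<n}\<close> assms(1) by auto
qed

lemma blade_carrier_Pow: "n \<le> K \<Longrightarrow> A \<in> Pow {0..<n} \<Longrightarrow> blade A \<in> carrier_mat N N"
  by (rule blade_carrier[OF Pow_subset_generators])

lemma beta_minus_scalar: "beta n (\<lambda>A. X A - c * cl_one A) = beta n X - c \<cdot>\<^sub>m 1\<^sub>m N"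
proof (rule eq_matI)
  fix i j assume "i < dim_row (beta n X - c \<cdot>\<^sub>m 1\<^sub>m N)" "j < dim_col (beta n X - c \<cdot>\<^sub>m 1\<^sub>m N)"
  then have ij: "i < N" "j < N"
    by auto
  have "beta n (\<lambda>A. X A - c * cl_one A) $$ (i, j) =
      beta n X $$ (i, j) - (\<Sum>A \<in> Pow {0..<n}. if A = {} then c * blade A $$ (i, j) else 0)"
    unfolding beta_index[OF ij] sum_subtractf[symmetric]
    by (rule sum.cong) (auto simp: cl_one_def algebra_simps)
  then show "beta n (\<lambda>A. X A - c * cl_one A) $$ (i, j) = (beta n X - c \<cdot>\<^sub>m 1\<^sub>m N) $$ (i, j)"
    using ij by simp
qed auto

lemma index_blade_mult_Pow:
  assumes "n \<le> K" "A \<in> Pow {0..<n}" "B \<in> Pow {0..<n}" "i < N" "j < N"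
  shows "(blade A * blade B) $$ (i, j) = blade_sign p A B * blade (sym_diff A B) $$ (i, j)"
proof -
  have "blade (sym_diff A B) \<in> carrier_mat N N"
    using blade_carrier_Pow[OF assms(1), of "sym_diff A B"] assms(2,3) by auto
  then show ?thesis
    using blade_mult[OF Pow_subset_generators[OF assms(1,2)] Pow_subset_generators[OF assms(1,3)]] assms(4,5)
    by simp
qed

lemma beta_mult:
  assumes "n \<le> K"
  shows "beta n (cl_mult n p X Y) = beta n X * beta n Y"
proof (rule eq_matI)
  fix i j assume "i < dim_row (beta n X * beta n Y)" "j < dim_col (beta n X * beta n Y)"
  then have ij: "i < N" "j < N"
    by auto
  let ?P = "Pow {0..<n}"
  have "beta n (cl_mult n p X Y) $$ (i, j) =
      (\<Sum>C\<in>?P. \<Sum>A\<in>?P. \<Sum>B\<in>?P. if sym_diff A B = C then blade_sign p A B * X A * Y B * blade C $$ (i, j) else 0)"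
    unfolding beta_index[OF ij] cl_mult_def sum_distrib_right
    by (intro sum.cong refl) auto
  also have "\<dots> = (\<Sum>A\<in>?P. \<Sum>B\<in>?P. \<Sum>C\<in>?P. if sym_diff A B = C then blade_sign p A B * X A * Y B * blade C $$ (i, j) else 0)"
    by (subst sum.swap) (subst (2) sum.swap, rule refl)
  also have "\<dots> = (\<Sum>A\<in>?P. \<Sum>B\<in>?P. X A * Y B * (blade A * blade B) $$ (i, j))"
    by (intro sum.cong refl) (auto simp: index_blade_mult_Pow[OF assms _ _ ij])
  also have "\<dots> = (\<Sum>A\<in>?P. \<Sum>B\<in>?P. \<Sum>k<N. X A * blade A $$ (i, k) * (Y B * blade B $$ (k, j)))"
  proof (intro sum.cong refl)
    fix A B assume "A \<in> ?P" "B \<in> ?P"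
    then have "blade A \<in> carrier_mat N N" "blade B \<in> carrier_mat N N"
      using blade_carrier_Pow[OF assms] by auto
    then show "X A * Y B * (blade A * blade B) $$ (i, j) =
        (\<Sum>k<N. X A * blade A $$ (i, k) * (Y B * blade B $$ (k, j)))"
      using ij by (simp add: scalar_prod_def sum_distrib_left atLeast0LessThan algebra_simps)
  qed
  also have "\<dots> = (\<Sum>k<N. (\<Sum>A\<in>?P. X A * blade A $$ (i, k)) * (\<Sum>B\<in>?P. Y B * blade B $$ (k, j)))"
    by (simp add: sum_product sum.swap[of _ "{..<N}"])
  also have "\<dots> = (beta n X * beta n Y) $$ (i, j)"
    using ij by (simp add: beta_index scalar_prod_def atLeast0LessThan)
  finally show "beta n (cl_mult n p X Y) $$ (i, j) = (beta n X * beta n Y) $$ (i, j)" .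
qed auto

lemma trace_beta:
  assumes "n \<le> K" "even K"
  shows "trace (beta n X) = of_nat N * X {}"
proof -
  let ?P = "Pow {0..<n}"
  have "trace (beta n X) = (\<Sum>i<N. \<Sum>A\<in>?P. X A * blade A $$ (i, i))"
    unfolding trace_def dim_beta by (rule sum.cong) (simp_all add: beta_index)
  also have "\<dots> = (\<Sum>A\<in>?P. X A * trace (blade A))"
    unfolding sum_distrib_left trace_def
    by (subst sum.swap) (use carrier_matD(1)[OF blade_carrier_Pow[OF assms(1)]] in simp)
  also have "\<dots> = (\<Sum>A\<in>?P. if A = {} then of_nat N * X A else 0)"
  proof (rule sum.cong)
    fix A assume "A \<in> ?P"
    then have "finite A" "A \<subseteq> {..<K}"
      by (rule Pow_subset_generators[OF assms(1)])+
    then show "X A * trace (blade A) = (if A = {} then of_nat N * X A else 0)"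
      using trace_blade[OF _ _ _ assms(2)] by (simp add: trace_def)
  qed simp
  also have "\<dots> = of_nat N * X {}"
    by simp
  finally show ?thesis .
qed

lemma char_coeff_eq_det:
  assumes "n \<le> K" "even K" "N = clN n" "0 < n"
  shows "char_coeff n p X N = - det (beta n X)"
proof -
  have "even N" "0 < N"
    using assms(3,4) by (auto simp: clN_def)
  have "char_coeff n p X N = - ((-1) ^ N * det (beta n X))"
  proof (rule faddeev_leverrier_det[of "beta n X" N "\<lambda>j. beta n (Mseq n p X j)"])
    fix j
    have "Mseq n p X (Suc j) = cl_mult n p X (\<lambda>A. Mseq n p X j A - char_coeff n p X (Suc j) * cl_one A)"
      by (simp add: char_coeff_def)
    then show "beta n (Mseq n p X (Suc j)) =
        beta n X * (beta n (Mseq n p X j) - char_coeff n p X (Suc j) \<cdot>\<^sub>m 1\<^sub>m N)"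
      by (simp add: beta_mult[OF assms(1)] beta_minus_scalar)
    show "of_nat (Suc j) * char_coeff n p X (Suc j) = trace (beta n (Mseq n p X j))"
      using trace_beta[OF assms(1,2)] assms(3) by (simp add: char_coeff_def scalar_part_def del: of_nat_Suc)
  qed (use \<open>0 < N\<close> in simp_all)
  then show ?thesis
    using \<open>even N\<close> by simp
qed

end

context unitary_clifford_rep
begin

lemma blade_adjoint_mult: "finite A \<Longrightarrow> A \<subseteq> {..<K} \<Longrightarrow> mat_adjoint (blade A) * blade A = 1\<^sub>m N"
proof (induction A rule: finite_linorder_min_induct)
  case (insert b A)
  have b: "b < K" and A: "blade A \<in> carrier_mat N N" and gb: "g b \<in> carrier_mat N N"
    using insert by (auto simp: blade_carrier gen_carrier)
  have "mat_adjoint (g b) * g b = (eta p b * eta p b) \<cdot>\<^sub>m 1\<^sub>m N"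
    using gen_adjoint[OF b] gen_square[OF b] gb by (simp add: mult_smult_assoc_mat[of _ N N _ N])
  then have "mat_adjoint (g b) * g b = 1\<^sub>m N"
    by (simp add: eta_square)
  moreover have "mat_adjoint (g b * blade A) * (g b * blade A) =
      mat_adjoint (blade A) * ((mat_adjoint (g b) * g b) * blade A)"
    using A gb by (simp add: mat_adjoint_mult[of _ N N _ N] assoc_mult_mat[of _ N N _ N _ N])
  ultimately show ?case
    using insert A gb by (simp add: blade_insert_min)
qed simp

lemma blade_adjoint:
  assumes "finite A" "A \<subseteq> {..<K}"
  shows "mat_adjoint (blade A) = blade_sign p A A \<cdot>\<^sub>m blade A"
proof -
  let ?s = "blade_sign p A A"
  have A: "blade A \<in> carrier_mat N N"
    using blade_carrier[OF assms] .
  have "mat_adjoint (blade A) = mat_adjoint (blade A) * ((?s * ?s) \<cdot>\<^sub>m 1\<^sub>m N)"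
    using A by (simp add: blade_sign_square)
  also have "\<dots> = ?s \<cdot>\<^sub>m ((mat_adjoint (blade A) * blade A) * blade A)"
    using blade_mult[OF assms assms] A
    by (simp add: mult_smult_distrib[of _ N N _ N] assoc_mult_mat[of _ N N _ N _ N])
  also have "\<dots> = ?s \<cdot>\<^sub>m blade A"
    using blade_adjoint_mult[OF assms] A by simp
  finally show ?thesis .
qed

lemma beta_herm:
  assumes "n \<le> K"
  shows "beta n (herm p X) = mat_adjoint (beta n X)"
proof (rule eq_matI)
  fix i j assume "i < dim_row (mat_adjoint (beta n X))" "j < dim_col (mat_adjoint (beta n X))"
  then have ij: "i < N" "j < N"
    by auto
  have "herm p X A * blade A $$ (i, j) = cnj (X A) * cnj (blade A $$ (j, i))" if "A \<in> Pow {0..<n}" for A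
  proof -
    have "finite A" "A \<subseteq> {..<K}"
      using Pow_subset_generators[OF assms that] by simp_all
    then have "blade A \<in> carrier_mat N N" "mat_adjoint (blade A) = blade_sign p A A \<cdot>\<^sub>m blade A"
      by (simp_all add: blade_carrier blade_adjoint)
    then have "blade_sign p A A * blade A $$ (i, j) = cnj (blade A $$ (j, i))"
      using index_mat_adjoint[of i "blade A" j] ij by simp
    then show ?thesis
      unfolding herm_def by (simp add: algebra_simps)
  qed
  then show "beta n (herm p X) $$ (i, j) = mat_adjoint (beta n X) $$ (i, j)"
    using ij by (simp add: beta_index sum_conjugate)
qed auto

lemma char_coeff_herm_mult_eq_0_iff:
  assumes "n \<le> K" "even K" "N = clN n" "0 < n"
  shows "char_coeff n p (cl_mult n p (herm p M) M) N = 0 \<longleftrightarrow> char_coeff n p M N = 0"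
proof -
  have "beta n (cl_mult n p (herm p M) M) = mat_adjoint (beta n M) * beta n M"
    using assms(1) by (simp add: beta_mult beta_herm)
  then have "det (beta n (cl_mult n p (herm p M) M)) = cnj (det (beta n M)) * det (beta n M)"
    by (simp add: det_mult[of _ N] det_mat_adjoint[of _ N])
  then show ?thesis
    by (simp add: char_coeff_eq_det[OF assms])
qed

end

lemma unitary_clifford_rep_exists: "\<exists>K g. n \<le> K \<and> even K \<and> unitary_clifford_rep (clN n) K p g"
proof -
  define m where "m = (n + 1) div 2"
  obtain G where "unitary_clifford_rep (2 ^ m) (2 * m) (2 * m) G"
    using gamma_matrices_exist by blast
  then have "unitary_clifford_rep (clN n) (2 * m) p (\<lambda>a. if a < p then G a else \<i> \<cdot>\<^sub>m G a)"
    unfolding clN_def m_def[symmetric] by (rule unitary_clifford_rep_signature)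
  moreover have "n \<le> 2 * m"
    by (simp add: m_def)
  ultimately show ?thesis
    by auto
qed

theorem lemma3:
  fixes p q :: nat and M :: mv
  assumes "p + q \<ge> 1"
    and "\<forall>A. \<not> A \<subseteq> {0..<p + q} \<longrightarrow> M A = 0"
  shows "(char_coeff (p + q) p (cl_mult (p + q) p (herm p M) M) (clN (p + q)) = 0
            \<longleftrightarrow> char_coeff (p + q) p M (clN (p + q)) = 0)
       \<and> (char_coeff (p + q) p (cl_mult (p + q) p (herm p M) M) 1 = 0 \<longleftrightarrow> M = (\<lambda>A. 0))"
proof -
  define n where "n = p + q"
  have "0 < n"
    using assms(1) unfolding n_def by linarith
  obtain K g where "n \<le> K" "even K" "unitary_clifford_rep (clN n) K p g"
    using unitary_clifford_rep_exists by blast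
  then have "char_coeff n p (cl_mult n p (herm p M) M) (clN n) = 0 \<longleftrightarrow> char_coeff n p M (clN n) = 0"
    using unitary_clifford_rep.char_coeff_herm_mult_eq_0_iff \<open>0 < n\<close> by blast
  moreover have "(\<forall>A \<in> Pow {0..<n}. M A = 0) \<longleftrightarrow> M = (\<lambda>A. 0)"
  proof
    assume "\<forall>A \<in> Pow {0..<n}. M A = 0"
    then show "M = (\<lambda>A. 0)"
      using assms(2) unfolding n_def by (intro ext) (metis PowI)
  qed simp
  ultimately show ?thesis
    using char_coeff_1_herm_mult_eq_0_iff[of n p M] unfolding n_def by simp
qed

end
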